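(* Let $(\Omega,\mathcal F,(\mathcal F_t)_{t\in[0,T]},P)$ be a filtered, complete probability space with right-continuous filtration that supports a one-dimensional $(\mathcal F_t)$-Brownian motion. Let $(D_t)_{t\in[0,T]}$ be a distribution invariant dynamic deviation measure, let $t\in[0,T]$, and let $Y\in L^2(\mathcal F_T)$ be independent of $\mathcal F_t$. Then $D_t(Y)$ is a.s. constant and $D_t(Y)=D_0(Y)$.
   Context: $L^2(\mathcal F_t)$ is the space of $\mathcal F_t$-measurable square-integrable random variables, $L^2_+(\mathcal F_t)$ and $L^\infty(\mathcal F_t)$ its non-negative and bounded elements. A dynamic deviation measure is a family $(D_t)_{t\in[0,T]}$ of maps $D_t:L^2(\mathcal F_T)\to L^2_+(\mathcal F_t)$ with $D_t(0)=0$ satisfying: (D1) $D_t(X+m)=D_t(X)$ for $m\in L^\infty(\mathcal F_t)$; (D2) $D_t(X)\ge0$, with $D_t(X)=0$ iff $X$ is $\mathcal F_t$-measurable; (D3) $D_t(\lambda X+(1-\lambda)Y)\le\lambda D_t(X)+(1-\lambda)D_t(Y)$ for $\lambda\in L^\infty(\mathcal F_t)$, $0\le\lambda\le1$; (D4) if $X^n\to X$ in $L^2$ then $D_t(X^n)\to D_t(X)$; (D5) $D_t(X)=D_t(E[X\mid\mathcal F_s])+E[D_s(X)\mid\mathcal F_t]$ for $t\le s$. $D$ is distribution invariant if $D_0(X_1)=D_0(X_2)$ whenever $X_1,X_2$ have the same distribution. *)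

theory Defs
  imports "HOL-Probability.Probability"
begin

text \<open>Square-integrable random variables measurable w.r.t. a sub-sigma-algebra G of M
  (representatives of elements of L2(G)).\<close>
definition L2 :: "'a measure \<Rightarrow> 'a measure \<Rightarrow> ('a \<Rightarrow> real) \<Rightarrow> bool" where
  "L2 M G f \<longleftrightarrow> f \<in> borel_measurable G \<and> integrable M (\<lambda>x. (f x)\<^sup>2)"

definition filtered_complete_prob_space ::
  "'a measure \<Rightarrow> (real \<Rightarrow> 'a measure) \<Rightarrow> real \<Rightarrow> bool" where
  "filtered_complete_prob_space M F T \<longleftrightarrow>
     prob_space M \<and> complete_measure M \<and> 0 < T \<and>
     (\<forall>t\<in>{0..T}. subalgebra M (F t)) \<and>
     (\<forall>s\<in>{0..T}. \<forall>t\<in>{0..T}. s \<le> t \<longrightarrow> sets (F s) \<subseteq> sets (F t)) \<and>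
     (\<forall>t\<in>{0..<T}. sets (F t) = (\<Inter>s\<in>{t<..T}. sets (F s)))"

definition brownian_motion ::
  "'a measure \<Rightarrow> (real \<Rightarrow> 'a measure) \<Rightarrow> real \<Rightarrow> (real \<Rightarrow> 'a \<Rightarrow> real) \<Rightarrow> bool" where
  "brownian_motion M F T W \<longleftrightarrow>
     (\<forall>t\<in>{0..T}. W t \<in> borel_measurable (F t)) \<and>
     (AE x in M. W 0 x = 0) \<and>
     (AE x in M. continuous_on {0..T} (\<lambda>t. W t x)) \<and>
     (\<forall>s t. 0 \<le> s \<longrightarrow> s < t \<longrightarrow> t \<le> T \<longrightarrow>
        distr M borel (\<lambda>x. W t x - W s x) = density lborel (normal_density 0 (sqrt (t - s))) \<and>
        prob_space.indep_set M (sets (vimage_algebra (space M) (\<lambda>x. W t x - W s x) borel))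
                               (sets (F s)))"

text \<open>Dynamic deviation measure (D_t), t in [0,T], on L2(F_T); D t X is a representative
  of the class D_t(X); all identities are almost sure.\<close>
definition dynamic_deviation_measure ::
  "'a measure \<Rightarrow> (real \<Rightarrow> 'a measure) \<Rightarrow> real \<Rightarrow> (real \<Rightarrow> ('a \<Rightarrow> real) \<Rightarrow> ('a \<Rightarrow> real)) \<Rightarrow> bool" where
  "dynamic_deviation_measure M F T D \<longleftrightarrow>
     \<comment> \<open>D_t maps L2(F_T) into L2_+(F_t), well defined on a.s.-classes\<close>
     (\<forall>t\<in>{0..T}. \<forall>X. L2 M (F T) X \<longrightarrow> L2 M (F t) (D t X) \<and> (AE x in M. 0 \<le> D t X x)) \<and>
     (\<forall>t\<in>{0..T}. \<forall>X X'. L2 M (F T) X \<longrightarrow> L2 M (F T) X' \<longrightarrow> (AE x in M. X x = X' x) \<longrightarrow>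
        (AE x in M. D t X x = D t X' x)) \<and>
     \<comment> \<open>D_t(0) = 0\<close>
     (\<forall>t\<in>{0..T}. AE x in M. D t (\<lambda>_. 0) x = 0) \<and>
     \<comment> \<open>(D1)\<close>
     (\<forall>t\<in>{0..T}. \<forall>X m. L2 M (F T) X \<longrightarrow> m \<in> borel_measurable (F t) \<longrightarrow>
        (\<exists>B. AE x in M. \<bar>m x\<bar> \<le> B) \<longrightarrow>
        (AE x in M. D t (\<lambda>y. X y + m y) x = D t X x)) \<and>
     \<comment> \<open>(D2)\<close>
     (\<forall>t\<in>{0..T}. \<forall>X. L2 M (F T) X \<longrightarrow>
        (AE x in M. 0 \<le> D t X x) \<and>
        ((AE x in M. D t X x = 0) \<longleftrightarrow>
           (\<exists>g\<in>borel_measurable (F t). AE x in M. X x = g x))) \<and>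
     \<comment> \<open>(D3)\<close>
     (\<forall>t\<in>{0..T}. \<forall>X Y l. L2 M (F T) X \<longrightarrow> L2 M (F T) Y \<longrightarrow> l \<in> borel_measurable (F t) \<longrightarrow>
        (AE x in M. 0 \<le> l x \<and> l x \<le> 1) \<longrightarrow>
        (AE x in M. D t (\<lambda>y. l y * X y + (1 - l y) * Y y) x
                      \<le> l x * D t X x + (1 - l x) * D t Y x)) \<and>
     \<comment> \<open>(D4) continuity in L2\<close>
     (\<forall>t\<in>{0..T}. \<forall>Xs X. (\<forall>n. L2 M (F T) (Xs n)) \<longrightarrow> L2 M (F T) X \<longrightarrow>
        (\<lambda>n. integral\<^sup>L M (\<lambda>x. (Xs n x - X x)\<^sup>2)) \<longlonglongrightarrow> 0 \<longrightarrow>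
        (\<lambda>n. integral\<^sup>L M (\<lambda>x. (D t (Xs n) x - D t X x)\<^sup>2)) \<longlonglongrightarrow> 0) \<and>
     \<comment> \<open>(D5) time consistency\<close>
     (\<forall>t\<in>{0..T}. \<forall>s\<in>{0..T}. \<forall>X. t \<le> s \<longrightarrow> L2 M (F T) X \<longrightarrow>
        (AE x in M. D t X x = D t (real_cond_exp M (F s) X) x + real_cond_exp M (F t) (D s X) x))"

definition distribution_invariant ::
  "'a measure \<Rightarrow> (real \<Rightarrow> 'a measure) \<Rightarrow> real \<Rightarrow> (real \<Rightarrow> ('a \<Rightarrow> real) \<Rightarrow> ('a \<Rightarrow> real)) \<Rightarrow> bool" where
  "distribution_invariant M F T D \<longleftrightarrow>
     (\<forall>X1 X2. L2 M (F T) X1 \<longrightarrow> L2 M (F T) X2 \<longrightarrow> distr M borel X1 = distr M borel X2 \<longrightarrow>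
        (AE x in M. D 0 X1 x = D 0 X2 x))"

end

theory Submission
  imports Defs
begin

text \<open>Write \<open>Z = D t Y\<close>. For \<open>A \<in> F t\<close> the conditional expectation of \<open>indicator A * Y\<close>
  given \<open>F t\<close> is \<open>indicator A * E Y\<close> by independence, and \<open>D t\<close> is local
  (\<open>D t (indicator A * X) = indicator A * D t X\<close>, a consequence of convexity), so time
  consistency between \<open>0\<close> and \<open>t\<close> gives
  \<open>D 0 (indicator A * Y) = D 0 (indicator A * E Y) + E [indicator A * Z | F 0]\<close>.
  If \<open>A, B \<in> F t\<close> have equal probability, then \<open>indicator A * Y\<close> and \<open>indicator B * Y\<close> have
  the same law, so by distribution invariance \<open>E [indicator A * Z] = E [indicator B * Z]\<close>.
  For \<open>t > 0\<close> the Brownian increment \<open>W t - W 0\<close> makes \<open>F t\<close> atomless, and a non-constant \<open>Z\<close>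
  would yield such \<open>A \<subseteq> {Z > E Z}\<close> and \<open>B \<subseteq> {Z < E Z}\<close> of equal positive probability,
  which is absurd. For \<open>t = 0\<close>, distribution invariance forces \<open>F 0\<close> to be trivial.
  Finally time consistency for \<open>Y\<close> itself gives \<open>D 0 Y = D 0 (E Y) + E [Z | F 0] = Z\<close>.\<close>

lemma normal_density_le: "normal_density \<mu> \<sigma> x \<le> 1 / sqrt (2 * pi * \<sigma>\<^sup>2)"
  unfolding normal_density_def by (rule mult_left_le) auto

lemma measure_normal_density_Ioc_le:
  assumes "0 < \<sigma>" "a \<le> b"
  shows "measure (density lborel (normal_density \<mu> \<sigma>)) {a<..b} \<le> (b - a) / sqrt (2 * pi * \<sigma>\<^sup>2)"
proof -
  let ?K = "1 / sqrt (2 * pi * \<sigma>\<^sup>2)"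
  have "emeasure (density lborel (normal_density \<mu> \<sigma>)) {a<..b}
      = (\<integral>\<^sup>+ x. ennreal (normal_density \<mu> \<sigma> x) * indicator {a<..b} x \<partial>lborel)"
    by (rule emeasure_density) auto
  also have "\<dots> \<le> (\<integral>\<^sup>+ x. ennreal ?K * indicator {a<..b} x \<partial>lborel)"
    by (intro nn_integral_mono) (auto simp: normal_density_le split: split_indicator)
  also have "\<dots> = ennreal ((b - a) / sqrt (2 * pi * \<sigma>\<^sup>2))"
    using assms by (simp add: nn_integral_cmult_indicator ennreal_mult'[symmetric])
  finally show ?thesis
    unfolding measure_def using assms by (simp add: enn2real_leI)
qed

lemma L2_mult_bounded:
  assumes "subalgebra M G" "L2 M G X" "l \<in> borel_measurable G" "\<And>x. \<bar>l x\<bar> \<le> B"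
  shows "L2 M G (\<lambda>x. l x * X x)"
proof -
  have X: "X \<in> borel_measurable G" and X2: "integrable M (\<lambda>x. (X x)\<^sup>2)"
    using assms(2) unfolding L2_def by simp_all
  have [measurable]: "l \<in> borel_measurable M" "X \<in> borel_measurable M"
    using measurable_from_subalg[OF assms(1)] assms(3) X by blast+
  have "(l x)\<^sup>2 \<le> B\<^sup>2" for x
    using power_mono[OF assms(4)[of x] abs_ge_zero, of 2] by (simp add: power2_abs)
  then have "(l x * X x)\<^sup>2 \<le> B\<^sup>2 * (X x)\<^sup>2" for x
    unfolding power_mult_distrib by (rule mult_right_mono) simp
  then have bound: "AE x in M. norm ((l x * X x)\<^sup>2) \<le> norm (B\<^sup>2 * (X x)\<^sup>2)"
    by (intro AE_I2) simp
  have "integrable M (\<lambda>x. (l x * X x)\<^sup>2)"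
    using X2 by (intro Bochner_Integration.integrable_bound[OF _ _ bound]) simp_all
  moreover have "(\<lambda>x. l x * X x) \<in> borel_measurable G"
    using assms(3) X by measurable
  ultimately show ?thesis
    unfolding L2_def by simp
qed

lemma L2_cong_AE:
  assumes "subalgebra M G" "L2 M G g" "f \<in> borel_measurable G" "AE x in M. f x = g x"
  shows "L2 M G f"
proof -
  have [measurable]: "f \<in> borel_measurable M" "g \<in> borel_measurable M"
    using assms(1-3) measurable_from_subalg unfolding L2_def by blast+
  have "integrable M (\<lambda>x. (f x)\<^sup>2) \<longleftrightarrow> integrable M (\<lambda>x. (g x)\<^sup>2)"
    using assms(4) by (intro integrable_cong_AE) auto
  then show ?thesis
    using assms unfolding L2_def by simp
qed

context finite_measure
begin

lemma sigma_finite_subalgebra_if_subalgebra: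
  "subalgebra M G \<Longrightarrow> sigma_finite_subalgebra M G"
  using finite_measure_subalgebra_is_sigma_finite finite_measure_axioms
  unfolding finite_measure_subalgebra_def finite_measure_subalgebra_axioms_def by blast

lemma L2_integrable: "subalgebra M G \<Longrightarrow> L2 M G X \<Longrightarrow> integrable M X"
  unfolding L2_def by (auto intro: square_integrable_imp_integrable measurable_from_subalg)

lemma L2_bounded:
  assumes "subalgebra M G" "f \<in> borel_measurable G" "\<And>x. \<bar>f x\<bar> \<le> B"
  shows "L2 M G f"
proof -
  have [measurable]: "f \<in> borel_measurable M"
    using measurable_from_subalg[OF assms(1,2)] .
  have "integrable M (\<lambda>x. (f x)\<^sup>2)"
  proof (rule integrable_const_bound[where B="B\<^sup>2"])
    have "\<bar>f x\<bar> \<le> \<bar>B\<bar>" for x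
      using assms(3)[of x] by linarith
    then show "AE x in M. norm ((f x)\<^sup>2) \<le> B\<^sup>2"
      by (simp add: abs_le_square_iff[symmetric])
  qed measurable
  then show ?thesis
    unfolding L2_def using assms(2) by simp
qed

lemma integral_indicator_mult_gt:
  fixes Z :: "'a \<Rightarrow> real"
  assumes "A \<in> sets M" "0 < measure M A" "integrable M Z" "\<And>x. x \<in> A \<Longrightarrow> c < Z x"
  shows "c * measure M A < (\<integral>x. indicator A x * Z x \<partial>M)"
proof -
  have "integrable M (\<lambda>x. indicator A x * c)" "integrable M (\<lambda>x. indicator A x * Z x)"
    using integrable_mult_indicator[OF assms(1), of "\<lambda>_. c"] integrable_mult_indicator[OF assms(1,3)]
    by simp_all
  moreover have "emeasure M A \<noteq> 0"
    using assms(2) by (simp add: emeasure_eq_measure)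
  moreover have "AE x in M. x \<in> A \<longrightarrow> indicator A x * c \<noteq> indicator A x * Z x"
    using assms(4) by (auto intro!: AE_I2 simp: less_imp_neq)
  moreover have "AE x in M. indicator A x * c \<le> indicator A x * Z x"
    using assms(4) by (auto intro!: AE_I2 split: split_indicator simp: less_imp_le)
  ultimately have "(\<integral>x. indicator A x * c \<partial>M) < (\<integral>x. indicator A x * Z x \<partial>M)"
    using assms(1) by (intro integral_less_AE[where A=A])
  then show ?thesis
    using assms(1) by (simp add: mult.commute)
qed

lemma integral_indicator_mult_lt:
  fixes Z :: "'a \<Rightarrow> real"
  assumes "A \<in> sets M" "0 < measure M A" "integrable M Z" "\<And>x. x \<in> A \<Longrightarrow> Z x < c"
  shows "(\<integral>x. indicator A x * Z x \<partial>M) < c * measure M A"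
  using integral_indicator_mult_gt[of A "\<lambda>x. - Z x" "- c"] assms by simp

end

context prob_space
begin

lemma continuous_on_prob_sublevel:
  fixes V :: "'a \<Rightarrow> real"
  assumes [measurable]: "V \<in> borel_measurable M" "C \<in> events"
    and increment_bound: "\<And>a b. a \<le> b \<Longrightarrow> \<P>(x in M. a < V x \<and> V x \<le> b) \<le> K * (b - a)"
  shows "continuous_on UNIV (\<lambda>r. prob (C \<inter> {x\<in>space M. V x \<le> r}))"
proof -
  define g where "g r = prob (C \<inter> {x\<in>space M. V x \<le> r})" for r
  have "0 \<le> K"
    using order_trans[OF measure_nonneg increment_bound[of 0 1]] by simp
  have g_mono: "g a \<le> g b" if "a \<le> b" for a b
    unfolding g_def using that by (intro finite_measure_mono) auto
  have g_increment: "g b - g a \<le> K * (b - a)" if "a \<le> b" for a b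
  proof -
    have "g b \<le> prob ((C \<inter> {x\<in>space M. V x \<le> a}) \<union> {x\<in>space M. a < V x \<and> V x \<le> b})"
      unfolding g_def by (intro finite_measure_mono) auto
    also have "\<dots> \<le> g a + \<P>(x in M. a < V x \<and> V x \<le> b)"
      unfolding g_def by (intro measure_subadditive) auto
    finally show ?thesis
      using increment_bound[OF that] by simp
  qed
  have "K-lipschitz_on UNIV g"
  proof (rule lipschitz_onI)
    fix x y :: real
    show "dist (g x) (g y) \<le> K * dist x y"
      using g_mono[of x y] g_mono[of y x] g_increment[of x y] g_increment[of y x]
      by (cases "x \<le> y") (auto simp: dist_real_def)
  qed fact
  then show ?thesis
    unfolding g_def by (rule lipschitz_on_continuous_on)
qed

lemma exists_sublevel_prob_eq:
  fixes V :: "'a \<Rightarrow> real"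
  assumes [measurable]: "V \<in> borel_measurable M" "C \<in> events"
    and increment_bound: "\<And>a b. a \<le> b \<Longrightarrow> \<P>(x in M. a < V x \<and> V x \<le> b) \<le> K * (b - a)"
    and "0 < p" "p < prob C"
  shows "\<exists>r. prob (C \<inter> {x\<in>space M. V x \<le> r}) = p"
proof -
  define g where "g r = prob (C \<inter> {x\<in>space M. V x \<le> r})" for r
  have "(\<lambda>n. g (real n)) \<longlonglongrightarrow> prob (\<Union>n. C \<inter> {x\<in>space M. V x \<le> real n})"
    unfolding g_def by (intro finite_Lim_measure_incseq) (auto simp: incseq_def)
  moreover have "(\<Union>n. C \<inter> {x\<in>space M. V x \<le> real n}) = C"
    using sets.sets_into_space[OF \<open>C \<in> events\<close>] by (auto intro: real_nat_ceiling_ge)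
  ultimately obtain n where n: "p < g (real n)"
    using order_tendstoD(1)[of "\<lambda>n. g (real n)" "prob C" sequentially p] \<open>p < prob C\<close>
    by (auto simp: eventually_sequentially)
  have "(\<lambda>n. g (- real n)) \<longlonglongrightarrow> prob (\<Inter>n. C \<inter> {x\<in>space M. V x \<le> - real n})"
    unfolding g_def by (intro finite_Lim_measure_decseq) (auto simp: decseq_def)
  moreover have "(\<Inter>n. C \<inter> {x\<in>space M. V x \<le> - real n}) = {}"
    by (auto simp: not_le) (meson leD minus_less_iff reals_Archimedean2)
  ultimately obtain m where m: "g (- real m) < p"
    using order_tendstoD(2)[of "\<lambda>n. g (- real n)" 0 sequentially p] \<open>0 < p\<close>
    by (auto simp: eventually_sequentially)
  have "continuous_on UNIV g"
    unfolding g_def using continuous_on_prob_sublevel[OF assms(1-3)] .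
  then have "\<exists>r. - real m \<le> r \<and> r \<le> real n \<and> g r = p"
    using n m by (intro IVT') (auto intro: continuous_on_subset)
  then show ?thesis
    unfolding g_def by blast
qed

lemma AE_eq_expectation_if_AE_le:
  fixes Z :: "'a \<Rightarrow> real"
  assumes "integrable M Z" "AE x in M. Z x \<le> expectation Z"
  shows "AE x in M. Z x = expectation Z"
proof -
  have "expectation (\<lambda>x. expectation Z - Z x) = 0"
    using assms(1) by (simp add: prob_space)
  then have "AE x in M. expectation Z - Z x = 0"
    using integral_nonneg_eq_0_iff_AE[of M "\<lambda>x. expectation Z - Z x"] assms by auto
  then show ?thesis
    by auto
qed

lemma AE_eq_expectation_if_AE_ge:
  fixes Z :: "'a \<Rightarrow> real"
  assumes "integrable M Z" "AE x in M. expectation Z \<le> Z x"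
  shows "AE x in M. Z x = expectation Z"
  using AE_eq_expectation_if_AE_le[of "\<lambda>x. - Z x"] assms by simp

lemma prob_above_and_below_expectation_pos:
  fixes Z :: "'a \<Rightarrow> real"
  assumes "integrable M Z" "\<not> (AE x in M. Z x = expectation Z)"
  shows "0 < \<P>(x in M. expectation Z < Z x)" "0 < \<P>(x in M. Z x < expectation Z)"
proof -
  have [measurable]: "Z \<in> borel_measurable M"
    using assms(1) by simp
  have events: "{x\<in>space M. expectation Z < Z x} \<in> events" "{x\<in>space M. Z x < expectation Z} \<in> events"
    by measurable
  have "\<not> (AE x in M. Z x \<le> expectation Z)" "\<not> (AE x in M. expectation Z \<le> Z x)"
    using AE_eq_expectation_if_AE_le AE_eq_expectation_if_AE_ge assms by blast+
  then have "\<P>(x in M. expectation Z < Z x) \<noteq> 0" "\<P>(x in M. Z x < expectation Z) \<noteq> 0"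
    using prob_Collect_eq_0[OF events(1)] prob_Collect_eq_0[OF events(2)] by (auto simp: not_less)
  then show "0 < \<P>(x in M. expectation Z < Z x)" "0 < \<P>(x in M. Z x < expectation Z)"
    using measure_nonneg by (auto simp: less_le)
qed

lemma AE_eq_expectation_if_trivial:
  fixes Z :: "'a \<Rightarrow> real"
  assumes "subalgebra M G" and trivial: "\<And>B. B \<in> sets G \<Longrightarrow> prob B = 0 \<or> prob B = 1"
    and [measurable]: "Z \<in> borel_measurable G" and "integrable M Z"
  shows "AE x in M. Z x = expectation Z"
proof -
  let ?C = "{x\<in>space M. expectation Z < Z x}"
  have "{x\<in>space G. expectation Z < Z x} \<in> sets G"
    by measurable
  then have C: "?C \<in> sets G" "?C \<in> events"
    using \<open>subalgebra M G\<close> unfolding subalgebra_def by auto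
  show ?thesis
  proof (cases "prob ?C = 0")
    case True
    then have "AE x in M. Z x \<le> expectation Z"
      using prob_Collect_eq_0[OF C(2)] by (simp add: not_less)
    then show ?thesis
      using AE_eq_expectation_if_AE_le \<open>integrable M Z\<close> by blast
  next
    case False
    then have above: "AE x in M. expectation Z < Z x"
      using trivial[OF C(1)] prob_Collect_eq_1[OF C(2)] by simp
    then have "AE x in M. expectation Z \<le> Z x"
      by eventually_elim simp
    then have "AE x in M. Z x = expectation Z"
      using AE_eq_expectation_if_AE_ge[OF \<open>integrable M Z\<close>] by blast
    with above have "AE x in M. False"
      by eventually_elim simp
    then show ?thesis
      by simp
  qed
qed

lemma distr_indicator_mult_eq:
  fixes U :: "'a \<Rightarrow> real"
  assumes [measurable]: "U \<in> borel_measurable M" "A \<in> events" "B \<in> events"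
    and eq: "\<And>S. S \<in> sets borel \<Longrightarrow> prob (A \<inter> (U -` S \<inter> space M)) = prob (B \<inter> (U -` S \<inter> space M))"
  shows "distr M borel (\<lambda>x. indicator A x * U x) = distr M borel (\<lambda>x. indicator B x * U x)"
proof -
  have preimage: "prob ((\<lambda>x. indicator E x * U x) -` S \<inter> space M)
      = prob (E \<inter> (U -` S \<inter> space M)) + (if 0 \<in> S then 1 - prob E else 0)"
    if [measurable]: "E \<in> events" "S \<in> sets borel" for E S
  proof -
    have "(\<lambda>x. indicator E x * U x) -` S \<inter> space M
        = (E \<inter> (U -` S \<inter> space M)) \<union> (if 0 \<in> S then space M - E else {})"
      by (cases "0 \<in> S") (auto split: split_indicator split_indicator_asm)
    moreover have "prob ((E \<inter> (U -` S \<inter> space M)) \<union> (if 0 \<in> S then space M - E else {}))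
        = prob (E \<inter> (U -` S \<inter> space M)) + prob (if 0 \<in> S then space M - E else {})"
      by (intro finite_measure_Union) auto
    ultimately show ?thesis
      by (auto simp: prob_compl)
  qed
  have "prob A = prob B"
    using eq[of UNIV] sets.sets_into_space[of A M] sets.sets_into_space[of B M]
    by (simp add: Int_absorb2)
  show ?thesis
  proof (rule measure_eqI)
    fix S
    assume "S \<in> sets (distr M borel (\<lambda>x. indicator A x * U x))"
    then have S: "S \<in> sets borel"
      by simp
    have "prob ((\<lambda>x. indicator A x * U x) -` S \<inter> space M)
        = prob ((\<lambda>x. indicator B x * U x) -` S \<inter> space M)"
      unfolding preimage[OF assms(2) S] preimage[OF assms(3) S] eq[OF S] \<open>prob A = prob B\<close> ..
    then show "emeasure (distr M borel (\<lambda>x. indicator A x * U x)) S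
        = emeasure (distr M borel (\<lambda>x. indicator B x * U x)) S"
      using S by (simp add: emeasure_distr emeasure_eq_measure)
  qed simp
qed

lemma distr_indicator_mult_const_eq:
  assumes "A \<in> events" "B \<in> events" "prob A = prob B"
  shows "distr M borel (\<lambda>x. indicator A x * c) = distr M borel (\<lambda>x. indicator B x * (c::real))"
  using assms sets.sets_into_space[of A M] sets.sets_into_space[of B M]
  by (intro distr_indicator_mult_eq) (auto simp: Int_absorb2)

lemma distr_indicator_mult_indep_eq:
  fixes U :: "'a \<Rightarrow> real"
  assumes "U \<in> borel_measurable M" and indep: "indep_set (sets (vimage_algebra (space M) U borel)) \<G>"
    and "A \<in> \<G>" "B \<in> \<G>" "prob A = prob B"
  shows "distr M borel (\<lambda>x. indicator A x * U x) = distr M borel (\<lambda>x. indicator B x * U x)"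
proof (rule distr_indicator_mult_eq)
  show "A \<in> events" "B \<in> events"
    using indep_setD_ev2[OF indep] assms by auto
  fix S :: "real set"
  assume "S \<in> sets borel"
  then have S: "U -` S \<inter> space M \<in> sets (vimage_algebra (space M) U borel)"
    by (rule in_vimage_algebra)
  have "prob (U -` S \<inter> space M \<inter> A) = prob (U -` S \<inter> space M \<inter> B)"
    using indep_setD[OF indep S \<open>A \<in> \<G>\<close>] indep_setD[OF indep S \<open>B \<in> \<G>\<close>] \<open>prob A = prob B\<close>
    by simp
  then show "prob (A \<inter> (U -` S \<inter> space M)) = prob (B \<inter> (U -` S \<inter> space M))"
    by (metis Int_commute)
qed fact

lemma integral_indicator_mult_indep:
  fixes Y :: "'a \<Rightarrow> real"
  assumes G: "subalgebra M G" and "integrable M Y"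
    and indep: "indep_set (sets (vimage_algebra (space M) Y borel)) (sets G)"
    and "A \<in> sets G"
  shows "expectation (\<lambda>x. indicator A x * Y x) = prob A * expectation Y"
proof -
  have A: "A \<in> events"
    using G \<open>A \<in> sets G\<close> unfolding subalgebra_def by auto
  have "indicator A \<in> borel_measurable G"
    using \<open>A \<in> sets G\<close> by measurable
  then have indicator_sets:
      "sets (vimage_algebra (space M) (indicator A :: 'a \<Rightarrow> real) borel) \<subseteq> sets G"
    using G unfolding subalgebra_def by (intro sets_image_in_sets) auto
  have "indep_set (sets (vimage_algebra (space M) (indicator A :: 'a \<Rightarrow> real) borel))
      (sets (vimage_algebra (space M) Y borel))"
  proof (unfold indep_sets2_eq, intro conjI ballI)
    show "sets (vimage_algebra (space M) (indicator A :: 'a \<Rightarrow> real) borel) \<subseteq> events"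
      using indicator_sets G unfolding subalgebra_def by blast
    show "sets (vimage_algebra (space M) Y borel) \<subseteq> events"
      using indep unfolding indep_sets2_eq by blast
    fix a b
    assume "a \<in> sets (vimage_algebra (space M) (indicator A :: 'a \<Rightarrow> real) borel)"
      and "b \<in> sets (vimage_algebra (space M) Y borel)"
    then have "prob (b \<inter> a) = prob b * prob a"
      using indep indicator_sets unfolding indep_sets2_eq by blast
    then show "prob (a \<inter> b) = prob a * prob b"
      by (metis Int_commute mult.commute)
  qed
  moreover have "random_variable borel (indicator A :: 'a \<Rightarrow> real)" "random_variable borel Y"
    using A \<open>integrable M Y\<close> by auto
  ultimately have "indep_var borel (indicator A :: 'a \<Rightarrow> real) borel Y"
    unfolding indep_var_eq sets_vimage_algebra by blast
  moreover have "integrable M (indicator A :: 'a \<Rightarrow> real)"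
    using A by (simp add: emeasure_eq_measure)
  ultimately show ?thesis
    using A \<open>integrable M Y\<close> by (simp add: indep_var_lebesgue_integral)
qed

lemma real_cond_exp_indep:
  fixes Y :: "'a \<Rightarrow> real"
  assumes G: "subalgebra M G" and "integrable M Y"
    and indep: "indep_set (sets (vimage_algebra (space M) Y borel)) (sets G)"
  shows "AE x in M. real_cond_exp M G Y x = expectation Y"
proof (rule sigma_finite_subalgebra.real_cond_exp_charact)
  show "sigma_finite_subalgebra M G"
    using G by (rule sigma_finite_subalgebra_if_subalgebra)
  fix A
  assume "A \<in> sets G"
  then have "A \<in> events"
    using G unfolding subalgebra_def by auto
  then show "(\<integral>x\<in>A. Y x \<partial>M) = (\<integral>x\<in>A. expectation Y \<partial>M)"
    using integral_indicator_mult_indep[OF assms \<open>A \<in> sets G\<close>]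
    by (simp add: set_lebesgue_integral_def)
qed (use \<open>integrable M Y\<close> in auto)

lemma prob_zero_or_one_if_indep_AE_eq:
  assumes indep: "indep_set \<A> \<B>" and "E \<in> \<A>" "G \<in> \<B>" and ae: "AE x in M. x \<in> E \<longleftrightarrow> x \<in> G"
  shows "prob E = 0 \<or> prob E = 1"
proof -
  have E: "E \<in> events" and G: "G \<in> events"
    using indep_setD_ev1[OF indep] indep_setD_ev2[OF indep] assms(2,3) by auto
  have "AE x in M. x \<in> E \<inter> G \<longleftrightarrow> x \<in> E" "AE x in M. x \<in> G \<longleftrightarrow> x \<in> E"
    using ae by (eventually_elim, blast)+
  then have "prob (E \<inter> G) = prob E" "prob G = prob E"
    using measure_eq_AE[OF _ sets.Int[OF E G] E] measure_eq_AE[OF _ G E] by blast+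
  then have "prob E = prob E * prob E"
    using indep_setD[OF indep \<open>E \<in> \<A>\<close> \<open>G \<in> \<B>\<close>] by simp
  then show ?thesis
    by simp
qed

end

locale filtered_prob_space =
  fixes M :: "'a measure" and F :: "real \<Rightarrow> 'a measure" and T :: real
  assumes filtered: "filtered_complete_prob_space M F T"
begin

sublocale prob_space M
  using filtered unfolding filtered_complete_prob_space_def by blast

lemma T_pos: "0 < T"
  using filtered unfolding filtered_complete_prob_space_def by blast

lemma subalgebra_F: "t \<in> {0..T} \<Longrightarrow> subalgebra M (F t)"
  using filtered unfolding filtered_complete_prob_space_def by blast

lemma space_F: "t \<in> {0..T} \<Longrightarrow> space (F t) = space M"
  using subalgebra_F unfolding subalgebra_def by blast

lemma sets_F_subset_events: "t \<in> {0..T} \<Longrightarrow> sets (F t) \<subseteq> events"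
  using subalgebra_F unfolding subalgebra_def by blast

lemma sets_F_mono: "s \<in> {0..T} \<Longrightarrow> u \<in> {0..T} \<Longrightarrow> s \<le> u \<Longrightarrow> sets (F s) \<subseteq> sets (F u)"
  using filtered unfolding filtered_complete_prob_space_def by blast

lemma measurable_F_mono:
  assumes "s \<in> {0..T}" "u \<in> {0..T}" "s \<le> u" "f \<in> borel_measurable (F s)"
  shows "f \<in> borel_measurable (F u)"
proof (rule measurable_from_subalg[OF _ assms(4)])
  show "subalgebra (F u) (F s)"
    using sets_F_mono[OF assms(1-3)] space_F assms(1,2) unfolding subalgebra_def by simp
qed

lemma measurable_F_imp_M: "t \<in> {0..T} \<Longrightarrow> f \<in> borel_measurable (F t) \<Longrightarrow> f \<in> borel_measurable M"
  using measurable_from_subalg[OF subalgebra_F] .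

lemma sigma_finite_subalgebra_F: "t \<in> {0..T} \<Longrightarrow> sigma_finite_subalgebra M (F t)"
  using sigma_finite_subalgebra_if_subalgebra subalgebra_F by blast

lemma brownian_motion_measurable:
  "brownian_motion M F T W \<Longrightarrow> t \<in> {0..T} \<Longrightarrow> W t \<in> borel_measurable (F t)"
  unfolding brownian_motion_def by blast

lemma brownian_increment_measurable:
  assumes "brownian_motion M F T W" "0 \<le> s" "s \<le> u" "u \<le> T"
  shows "(\<lambda>x. W u x - W s x) \<in> borel_measurable (F u)"
proof -
  have [measurable]: "W u \<in> borel_measurable (F u)" "W s \<in> borel_measurable (F u)"
    using assms brownian_motion_measurable[OF assms(1)] measurable_F_mono[of s u "W s"] by simp_all
  show ?thesis
    by measurable
qed

lemma brownian_increment_law: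
  "brownian_motion M F T W \<Longrightarrow> 0 \<le> s \<Longrightarrow> s < u \<Longrightarrow> u \<le> T \<Longrightarrow>
    distr M borel (\<lambda>x. W u x - W s x) = density lborel (normal_density 0 (sqrt (u - s)))"
  unfolding brownian_motion_def by blast

lemma brownian_increment_indep:
  "brownian_motion M F T W \<Longrightarrow> 0 \<le> s \<Longrightarrow> s < u \<Longrightarrow> u \<le> T \<Longrightarrow>
    indep_set (sets (vimage_algebra (space M) (\<lambda>x. W u x - W s x) borel)) (sets (F s))"
  unfolding brownian_motion_def by blast

lemma brownian_increment_prob_le:
  assumes bm: "brownian_motion M F T W" and "0 \<le> s" "s < u" "u \<le> T" "a \<le> b"
  shows "\<P>(x in M. a < W u x - W s x \<and> W u x - W s x \<le> b) \<le> 1 / sqrt (2 * pi * (u - s)) * (b - a)"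
proof -
  let ?V = "\<lambda>x. W u x - W s x"
  have "?V \<in> borel_measurable M"
    using assms by (intro measurable_F_imp_M[of u] brownian_increment_measurable) auto
  moreover have "{x\<in>space M. a < ?V x \<and> ?V x \<le> b} = ?V -` {a<..b} \<inter> space M"
    by auto
  ultimately have "\<P>(x in M. a < ?V x \<and> ?V x \<le> b) = measure (distr M borel ?V) {a<..b}"
    by (simp add: measure_distr)
  also have "distr M borel ?V = density lborel (normal_density 0 (sqrt (u - s)))"
    using brownian_increment_law[OF bm] assms by blast
  also have "measure \<dots> {a<..b} \<le> (b - a) / sqrt (2 * pi * (sqrt (u - s))\<^sup>2)"
    using assms by (intro measure_normal_density_Ioc_le) auto
  also have "\<dots> = 1 / sqrt (2 * pi * (u - s)) * (b - a)"
    using assms by simp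
  finally show ?thesis .
qed

lemma exists_increment_sublevel_prob_eq:
  assumes bm: "brownian_motion M F T W" and "0 < t" "t \<le> T"
    and "C \<in> events" "0 < p" "p < prob C"
  shows "\<exists>r. prob (C \<inter> {x\<in>space M. W t x - W 0 x \<le> r}) = p"
proof (rule exists_sublevel_prob_eq)
  show "(\<lambda>x. W t x - W 0 x) \<in> borel_measurable M"
    using assms by (intro measurable_F_imp_M[of t] brownian_increment_measurable) auto
  show "\<P>(x in M. a < W t x - W 0 x \<and> W t x - W 0 x \<le> b) \<le> 1 / sqrt (2 * pi * t) * (b - a)"
    if "a \<le> b" for a b
    using brownian_increment_prob_le[OF bm _ _ _ that, of 0 t] assms by simp
qed fact+

text \<open>For \<open>t > 0\<close> the increment \<open>W t - W 0\<close> is \<open>F t\<close>-measurable with a bounded density,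
  so \<open>F t\<close> has no atoms.\<close>
lemma exists_subevent_F_prob_eq:
  assumes bm: "brownian_motion M F T W" and "0 < t" "t \<le> T"
    and C: "C \<in> sets (F t)" and "0 < p" "p \<le> prob C"
  shows "\<exists>A\<in>sets (F t). A \<subseteq> C \<and> prob A = p"
proof (cases "p = prob C")
  case True
  then show ?thesis
    using C by blast
next
  case False
  let ?V = "\<lambda>x. W t x - W 0 x"
  have t: "t \<in> {0..T}"
    using assms by simp
  have "C \<in> events"
    using C sets_F_subset_events[OF t] by blast
  moreover have "p < prob C"
    using assms False by simp
  ultimately obtain r where r: "prob (C \<inter> {x\<in>space M. ?V x \<le> r}) = p"
    using exists_increment_sublevel_prob_eq[OF bm \<open>0 < t\<close> \<open>t \<le> T\<close> _ \<open>0 < p\<close>] by blast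
  have [measurable]: "?V \<in> borel_measurable (F t)"
    using assms by (intro brownian_increment_measurable) auto
  have "{x\<in>space (F t). ?V x \<le> r} \<in> sets (F t)"
    by measurable
  then have "C \<inter> {x\<in>space M. ?V x \<le> r} \<in> sets (F t)"
    unfolding space_F[OF t] by (intro sets.Int C)
  with r show ?thesis
    by (intro bexI[of _ "C \<inter> {x\<in>space M. ?V x \<le> r}"]) auto
qed

end

locale deviation_measure_space = filtered_prob_space +
  fixes D :: "real \<Rightarrow> ('a \<Rightarrow> real) \<Rightarrow> ('a \<Rightarrow> real)"
  assumes deviation: "dynamic_deviation_measure M F T D"
begin

context
  fixes t X
  assumes t: "t \<in> {0..T}" and X: "L2 M (F T) X"
begin

lemma D_L2: "L2 M (F t) (D t X)"
  using deviation t X unfolding dynamic_deviation_measure_def by (elim conjE) blast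

lemma D_nonneg: "AE x in M. 0 \<le> D t X x"
  using deviation t X unfolding dynamic_deviation_measure_def by (elim conjE) blast

lemma D_cong_AE: "L2 M (F T) X' \<Longrightarrow> AE x in M. X x = X' x \<Longrightarrow> AE x in M. D t X x = D t X' x"
  using deviation t X unfolding dynamic_deviation_measure_def by (elim conjE) blast

lemma D_eq_0_iff:
  "(AE x in M. D t X x = 0) \<longleftrightarrow> (\<exists>g\<in>borel_measurable (F t). AE x in M. X x = g x)"
  using deviation t X unfolding dynamic_deviation_measure_def by (elim conjE) blast

lemma D_convex:
  "L2 M (F T) Y \<Longrightarrow> l \<in> borel_measurable (F t) \<Longrightarrow> AE x in M. 0 \<le> l x \<and> l x \<le> 1 \<Longrightarrow>
    AE x in M. D t (\<lambda>y. l y * X y + (1 - l y) * Y y) x \<le> l x * D t X x + (1 - l x) * D t Y x"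
  using deviation t X unfolding dynamic_deviation_measure_def by (elim conjE) blast

lemma D_time_consistent:
  assumes "s \<in> {0..T}" "t \<le> s"
  shows "AE x in M. D t X x = D t (real_cond_exp M (F s) X) x + real_cond_exp M (F t) (D s X) x"
proof -
  have "\<forall>t\<in>{0..T}. \<forall>s\<in>{0..T}. \<forall>X. t \<le> s \<longrightarrow> L2 M (F T) X \<longrightarrow>
      (AE x in M. D t X x = D t (real_cond_exp M (F s) X) x + real_cond_exp M (F t) (D s X) x)"
    using deviation unfolding dynamic_deviation_measure_def by (elim conjE) assumption
  then show ?thesis
    using t X assms by blast
qed

lemma D_measurable: "D t X \<in> borel_measurable (F t)"
  using D_L2 unfolding L2_def by blast

lemma D_integrable: "integrable M (D t X)"
  using L2_integrable[OF subalgebra_F[OF t] D_L2] .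

lemma D_eq_0_if_measurable: "X \<in> borel_measurable (F t) \<Longrightarrow> AE x in M. D t X x = 0"
  using D_eq_0_iff by blast

end

text \<open>Convexity with the \<open>F t\<close>-measurable weight \<open>indicator A\<close>, applied once to \<open>X\<close> and \<open>0\<close>
  and once to \<open>indicator A * X\<close> and \<open>(1 - indicator A) * X\<close>, bounds \<open>D t (indicator A * X)\<close> from
  both sides.\<close>
lemma D_indicator_mult:
  assumes t: "t \<in> {0..T}" and X: "L2 M (F T) X" and A: "A \<in> sets (F t)"
  shows "AE x in M. D t (\<lambda>y. indicator A y * X y) x = indicator A x * D t X x"
proof -
  have A_T: "A \<in> sets (F T)"
    using A sets_F_mono[OF t, of T] t by auto
  have weight: "(indicator A :: 'a \<Rightarrow> real) \<in> borel_measurable (F t)"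
      "AE x in M. 0 \<le> (indicator A x :: real) \<and> indicator A x \<le> (1::real)"
    using A by (simp_all split: split_indicator)
  have L2_0: "L2 M (F T) (\<lambda>_. 0)"
    by (rule L2_bounded[OF subalgebra_F[of T], of _ 0]) (use t in auto)
  have L2_in: "L2 M (F T) (\<lambda>y. indicator A y * X y)"
    by (rule L2_mult_bounded[OF subalgebra_F[of T] X, of _ 1])
      (use t A_T in \<open>auto split: split_indicator\<close>)
  have L2_out: "L2 M (F T) (\<lambda>y. (1 - indicator A y) * X y)"
    by (rule L2_mult_bounded[OF subalgebra_F[of T] X, of _ 1])
      (use t A_T in \<open>auto split: split_indicator\<close>)
  have upper: "AE x in M. D t (\<lambda>y. indicator A y * X y) x
      \<le> indicator A x * D t X x + (1 - indicator A x) * D t (\<lambda>_. 0) x"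
    using D_convex[OF t X L2_0 weight] by simp
  have "(\<lambda>y. indicator A y * (indicator A y * X y)
      + (1 - indicator A y) * ((1 - indicator A y) * X y)) = X"
    by (auto simp: fun_eq_iff split: split_indicator)
  then have lower: "AE x in M. D t X x \<le> indicator A x * D t (\<lambda>y. indicator A y * X y) x
      + (1 - indicator A x) * D t (\<lambda>y. (1 - indicator A y) * X y) x"
    using D_convex[OF t L2_in L2_out weight] by simp
  have "AE x in M. D t (\<lambda>_. 0) x = 0"
    using D_eq_0_if_measurable[OF t L2_0] by simp
  then show ?thesis
    using upper lower D_nonneg[OF t L2_in]
  proof eventually_elim
    case (elim x)
    then show ?case
      by (cases "x \<in> A") (simp_all add: antisym)
  qed
qed

lemma prob_zero_or_one_if_D_0_indicator_eq_0:
  assumes indep: "indep_set \<A> (sets (F 0))" and "E \<in> \<A>" "E \<in> sets (F T)"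
    and "AE x in M. D 0 (indicator E) x = 0"
  shows "prob E = 0 \<or> prob E = 1"
proof -
  have T: "T \<in> {0..T}" and zero: "0 \<in> {0..T}"
    using T_pos by auto
  have "L2 M (F T) (indicator E)"
    using \<open>E \<in> sets (F T)\<close> by (intro L2_bounded[OF subalgebra_F[OF T], of _ 1]) auto
  then obtain g :: "'a \<Rightarrow> real"
    where g: "g \<in> borel_measurable (F 0)" and g_E: "AE x in M. indicator E x = g x"
    using D_eq_0_iff[OF zero] assms(4) by blast
  have "AE x in M. x \<in> E \<longleftrightarrow> x \<in> {x\<in>space M. 1/2 < g x}"
    using g_E AE_space by eventually_elim (auto split: split_indicator split_indicator_asm)
  moreover have "{x\<in>space (F 0). 1/2 < g x} \<in> sets (F 0)"
    using g by measurable
  ultimately show ?thesis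
    using prob_zero_or_one_if_indep_AE_eq[OF indep \<open>E \<in> \<A>\<close>] space_F[OF zero] by auto
qed

text \<open>An \<open>F 0\<close>-event \<open>B\<close> of intermediate probability would have the same law as an event \<open>E\<close>
  of the same probability defined by the increment \<open>W T - W 0\<close>; by distribution invariance,
  \<open>D 0 (indicator E) = D 0 (indicator B) = 0\<close>, although \<open>E\<close> is independent of \<open>F 0\<close>.\<close>
lemma prob_F_0_zero_or_one:
  assumes bm: "brownian_motion M F T W" and di: "distribution_invariant M F T D"
    and B: "B \<in> sets (F 0)"
  shows "prob B = 0 \<or> prob B = 1"
proof (rule ccontr)
  let ?V = "\<lambda>x. W T x - W 0 x"
  have T: "T \<in> {0..T}" and zero: "0 \<in> {0..T}"
    using T_pos by auto
  assume "\<not> (prob B = 0 \<or> prob B = 1)"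
  then have "0 < prob B" "prob B < prob (space M)"
    using measure_nonneg[of M B] prob_le_1[of B] prob_space by linarith+
  then obtain r where r: "prob (space M \<inter> {x\<in>space M. ?V x \<le> r}) = prob B"
    using exists_increment_sublevel_prob_eq[OF bm T_pos order_refl sets.top] by blast
  have V[measurable]: "?V \<in> borel_measurable (F T)"
    using bm T_pos by (intro brownian_increment_measurable) auto
  define E where "E = ?V -` {..r} \<inter> space M"
  have E_V: "E \<in> sets (vimage_algebra (space M) ?V borel)"
    unfolding E_def by (rule in_vimage_algebra) simp
  have "{x\<in>space (F T). ?V x \<le> r} \<in> sets (F T)"
    by measurable
  then have E_T: "E \<in> sets (F T)"
    unfolding E_def space_F[OF T] by (simp add: vimage_def Int_def conj_commute)
  have "prob E = prob B"
    using r unfolding E_def by (simp add: vimage_def Int_def conj_commute)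
  then have "distr M borel (\<lambda>x. indicator E x * 1) = distr M borel (\<lambda>x. indicator B x * (1::real))"
    using E_T B sets_F_subset_events[OF T] sets_F_subset_events[OF zero]
    by (intro distr_indicator_mult_const_eq) auto
  moreover have "L2 M (F T) (indicator E)" "L2 M (F T) (indicator B)"
    using E_T B sets_F_mono[OF zero T] T_pos
    by (auto intro!: L2_bounded[OF subalgebra_F[OF T], of _ 1])
  ultimately have "AE x in M. D 0 (indicator E) x = D 0 (indicator B) x"
    using di unfolding distribution_invariant_def by simp
  moreover have "AE x in M. D 0 (indicator B) x = 0"
    using \<open>L2 M (F T) (indicator B)\<close> B by (intro D_eq_0_if_measurable[OF zero]) auto
  ultimately have "AE x in M. D 0 (indicator E) x = 0"
    by eventually_elim simp
  then have "prob E = 0 \<or> prob E = 1"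
    using prob_zero_or_one_if_D_0_indicator_eq_0[OF brownian_increment_indep[OF bm] E_V E_T] T_pos
    by simp
  with \<open>prob E = prob B\<close> \<open>\<not> (prob B = 0 \<or> prob B = 1)\<close> show False
    by simp
qed

lemma D_0_AE_eq_expectation:
  assumes "brownian_motion M F T W" "distribution_invariant M F T D" "L2 M (F T) X"
  shows "AE x in M. D 0 X x = expectation (D 0 X)"
proof -
  have zero: "0 \<in> {0..T}"
    using T_pos by auto
  show ?thesis
    using prob_F_0_zero_or_one[OF assms(1,2)]
    by (intro AE_eq_expectation_if_trivial[OF subalgebra_F[OF zero]] D_measurable[OF zero assms(3)]
        D_integrable[OF zero assms(3)])
qed

context
  fixes t Y
  assumes t: "t \<in> {0..T}" and Y: "L2 M (F T) Y"
    and indep: "indep_set (sets (vimage_algebra (space M) Y borel)) (sets (F t))"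
begin

lemma real_cond_exp_indicator_mult_indep:
  assumes A: "A \<in> sets (F t)"
  shows "AE x in M. real_cond_exp M (F t) (\<lambda>y. indicator A y * Y y) x = indicator A x * expectation Y"
proof -
  have T: "T \<in> {0..T}"
    using t by auto
  have "integrable M Y"
    using L2_integrable[OF subalgebra_F[OF T] Y] .
  moreover have "A \<in> events"
    using A sets_F_subset_events[OF t] by blast
  ultimately have "integrable M (\<lambda>y. indicator A y * Y y)"
    using integrable_mult_indicator[of A M Y] by simp
  moreover have "(indicator A :: 'a \<Rightarrow> real) \<in> borel_measurable (F t)"
    using A by simp
  ultimately have "AE x in M. real_cond_exp M (F t) (\<lambda>y. indicator A y * Y y) x
      = indicator A x * real_cond_exp M (F t) Y x"
    using sigma_finite_subalgebra.real_cond_exp_mult[OF sigma_finite_subalgebra_F[OF t]]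
      borel_measurable_integrable[OF \<open>integrable M Y\<close>] by blast
  then show ?thesis
    using real_cond_exp_indep[OF subalgebra_F[OF t] \<open>integrable M Y\<close> indep]
    by eventually_elim simp
qed

lemma D_0_indicator_mult_indep:
  assumes A: "A \<in> sets (F t)"
  shows "AE x in M. D 0 (\<lambda>y. indicator A y * Y y) x
    = D 0 (\<lambda>y. indicator A y * expectation Y) x + real_cond_exp M (F 0) (\<lambda>y. indicator A y * D t Y y) x"
proof -
  have T: "T \<in> {0..T}" and zero: "0 \<in> {0..T}" and "0 \<le> t"
    using t by auto
  have A_T: "A \<in> sets (F T)"
    using A sets_F_mono[OF t T] t by auto
  have L2_AY: "L2 M (F T) (\<lambda>y. indicator A y * Y y)"
    by (rule L2_mult_bounded[OF subalgebra_F[OF T] Y, of _ 1])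
      (use A_T in \<open>auto split: split_indicator\<close>)
  have L2_AE: "L2 M (F T) (\<lambda>y. indicator A y * expectation Y)"
    by (rule L2_bounded[OF subalgebra_F[OF T], of _ "\<bar>expectation Y\<bar>"])
      (use A_T in \<open>auto split: split_indicator\<close>)
  have "real_cond_exp M (F t) (\<lambda>y. indicator A y * Y y) \<in> borel_measurable (F T)"
    using t by (intro measurable_F_mono[OF t T] borel_measurable_cond_exp) auto
  then have "L2 M (F T) (real_cond_exp M (F t) (\<lambda>y. indicator A y * Y y))"
    by (rule L2_cong_AE[OF subalgebra_F[OF T] L2_AE _ real_cond_exp_indicator_mult_indep[OF A]])
  then have cond_exp: "AE x in M. D 0 (real_cond_exp M (F t) (\<lambda>y. indicator A y * Y y)) x
      = D 0 (\<lambda>y. indicator A y * expectation Y) x"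
    using D_cong_AE[OF zero _ L2_AE real_cond_exp_indicator_mult_indep[OF A]] by blast
  have "D t (\<lambda>y. indicator A y * Y y) \<in> borel_measurable M"
      "(\<lambda>y. indicator A y * D t Y y) \<in> borel_measurable M"
    using measurable_F_imp_M[OF t D_measurable[OF t L2_AY]]
      measurable_F_imp_M[OF t D_measurable[OF t Y]] A sets_F_subset_events[OF t] by auto
  then have local: "AE x in M. real_cond_exp M (F 0) (D t (\<lambda>y. indicator A y * Y y)) x
      = real_cond_exp M (F 0) (\<lambda>y. indicator A y * D t Y y) x"
    by (intro sigma_finite_subalgebra.real_cond_exp_cong[OF sigma_finite_subalgebra_F[OF zero]]
        D_indicator_mult[OF t Y A])
  show ?thesis
    using D_time_consistent[OF zero L2_AY t \<open>0 \<le> t\<close>] cond_exp local by eventually_elim simp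
qed

lemma integral_indicator_mult_D_eq:
  assumes di: "distribution_invariant M F T D"
    and A: "A \<in> sets (F t)" and B: "B \<in> sets (F t)" and "prob A = prob B"
  shows "expectation (\<lambda>x. indicator A x * D t Y x) = expectation (\<lambda>x. indicator B x * D t Y x)"
proof -
  have T: "T \<in> {0..T}" and zero: "0 \<in> {0..T}" and "0 \<le> t"
    using t by auto
  have sets: "A \<in> sets (F T)" "B \<in> sets (F T)" "A \<in> events" "B \<in> events"
    using A B sets_F_mono[OF t T] sets_F_subset_events[OF t] t by auto
  have "Y \<in> borel_measurable M"
    using Y measurable_F_imp_M[OF T] unfolding L2_def by blast
  have L2_CY: "L2 M (F T) (\<lambda>y. indicator C y * Y y)" if "C \<in> sets (F T)" for C
    by (rule L2_mult_bounded[OF subalgebra_F[OF T] Y, of _ 1])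
      (use that in \<open>auto split: split_indicator\<close>)
  have L2_CE: "L2 M (F T) (\<lambda>y. indicator C y * expectation Y)" if "C \<in> sets (F T)" for C
    by (rule L2_bounded[OF subalgebra_F[OF T], of _ "\<bar>expectation Y\<bar>"])
      (use that in \<open>auto split: split_indicator\<close>)
  have "AE x in M. D 0 (\<lambda>y. indicator A y * Y y) x = D 0 (\<lambda>y. indicator B y * Y y) x"
    using di L2_CY[OF sets(1)] L2_CY[OF sets(2)]
      distr_indicator_mult_indep_eq[OF \<open>Y \<in> borel_measurable M\<close> indep A B \<open>prob A = prob B\<close>]
    unfolding distribution_invariant_def by blast
  moreover have "AE x in M. D 0 (\<lambda>y. indicator A y * expectation Y) x
      = D 0 (\<lambda>y. indicator B y * expectation Y) x"
    using di L2_CE[OF sets(1)] L2_CE[OF sets(2)]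
      distr_indicator_mult_const_eq[OF sets(3,4) \<open>prob A = prob B\<close>]
    unfolding distribution_invariant_def by blast
  ultimately
  have "AE x in M. real_cond_exp M (F 0) (\<lambda>y. indicator A y * D t Y y) x
      = real_cond_exp M (F 0) (\<lambda>y. indicator B y * D t Y y) x"
    using D_0_indicator_mult_indep[OF A] D_0_indicator_mult_indep[OF B] by eventually_elim simp
  moreover have integrable: "integrable M (\<lambda>y. indicator C y * D t Y y)" if "C \<in> events" for C
    using integrable_mult_indicator[OF that D_integrable[OF t Y]] by simp
  ultimately have "expectation (real_cond_exp M (F 0) (\<lambda>y. indicator A y * D t Y y))
      = expectation (real_cond_exp M (F 0) (\<lambda>y. indicator B y * D t Y y))"
    by (intro integral_cong_AE) (auto intro: borel_measurable_cond_exp2)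
  then show ?thesis
    using sigma_finite_subalgebra.real_cond_exp_int(2)[OF sigma_finite_subalgebra_F[OF zero] integrable]
      sets(3,4) by simp
qed

lemma D_indep_AE_eq_expectation:
  assumes bm: "brownian_motion M F T W" and di: "distribution_invariant M F T D" and "0 < t"
  shows "AE x in M. D t Y x = expectation (D t Y)"
proof (rule ccontr)
  let ?Z = "D t Y" and ?c = "expectation (D t Y)"
  define C1 where "C1 = {x\<in>space M. ?c < ?Z x}"
  define C2 where "C2 = {x\<in>space M. ?Z x < ?c}"
  have Z[measurable]: "?Z \<in> borel_measurable (F t)" and "integrable M ?Z"
    using D_measurable[OF t Y] D_integrable[OF t Y] .
  have "{x\<in>space (F t). ?c < ?Z x} \<in> sets (F t)" "{x\<in>space (F t). ?Z x < ?c} \<in> sets (F t)"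
    by measurable
  then have C: "C1 \<in> sets (F t)" "C2 \<in> sets (F t)" "C1 \<in> events" "C2 \<in> events"
    unfolding C1_def C2_def space_F[OF t] using sets_F_subset_events[OF t] by auto
  assume "\<not> (AE x in M. ?Z x = ?c)"
  then have "0 < prob C1" "0 < prob C2"
    using prob_above_and_below_expectation_pos[OF \<open>integrable M ?Z\<close>] unfolding C1_def C2_def by auto
  define m where "m = min (prob C1) (prob C2)"
  have "0 < m"
    using \<open>0 < prob C1\<close> \<open>0 < prob C2\<close> unfolding m_def by simp
  obtain A B where A: "A \<in> sets (F t)" "A \<subseteq> C1" "prob A = m"
    and B: "B \<in> sets (F t)" "B \<subseteq> C2" "prob B = m"
    using exists_subevent_F_prob_eq[OF bm \<open>0 < t\<close> _ C(1) \<open>0 < m\<close>]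
      exists_subevent_F_prob_eq[OF bm \<open>0 < t\<close> _ C(2) \<open>0 < m\<close>] t
    unfolding m_def by fastforce
  have "A \<in> events" "B \<in> events"
    using A B sets_F_subset_events[OF t] by auto
  have "?c * m < expectation (\<lambda>x. indicator A x * ?Z x)"
    using integral_indicator_mult_gt[OF \<open>A \<in> events\<close> _ \<open>integrable M ?Z\<close>] A \<open>0 < m\<close>
    unfolding C1_def by auto
  also have "\<dots> = expectation (\<lambda>x. indicator B x * ?Z x)"
    using integral_indicator_mult_D_eq[OF di A(1) B(1)] A B by simp
  also have "\<dots> < ?c * m"
    using integral_indicator_mult_lt[OF \<open>B \<in> events\<close> _ \<open>integrable M ?Z\<close>] B \<open>0 < m\<close>
    unfolding C2_def by auto
  finally show False .
qed

lemma D_0_AE_eq_if_D_AE_eq: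
  assumes "AE x in M. D t Y x = c"
  shows "AE x in M. D 0 Y x = c"
proof -
  have T: "T \<in> {0..T}" and zero: "0 \<in> {0..T}" and "0 \<le> t"
    using t by auto
  have cond_exp_Y: "AE x in M. real_cond_exp M (F t) Y x = expectation Y"
    using real_cond_exp_indep[OF subalgebra_F[OF t] L2_integrable[OF subalgebra_F[OF T] Y] indep] .
  have L2_EY: "L2 M (F T) (\<lambda>_. expectation Y)"
    by (rule L2_bounded[OF subalgebra_F[OF T], of _ "\<bar>expectation Y\<bar>"]) auto
  have "real_cond_exp M (F t) Y \<in> borel_measurable (F T)"
    using t by (intro measurable_F_mono[OF t T] borel_measurable_cond_exp) auto
  then have "L2 M (F T) (real_cond_exp M (F t) Y)"
    by (rule L2_cong_AE[OF subalgebra_F[OF T] L2_EY _ cond_exp_Y])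
  then have "AE x in M. D 0 (real_cond_exp M (F t) Y) x = D 0 (\<lambda>_. expectation Y) x"
    by (rule D_cong_AE[OF zero _ L2_EY cond_exp_Y])
  moreover have "AE x in M. D 0 (\<lambda>_. expectation Y) x = 0"
    by (rule D_eq_0_if_measurable[OF zero L2_EY]) simp
  moreover have "AE x in M. real_cond_exp M (F 0) (D t Y) x = real_cond_exp M (F 0) (\<lambda>_. c) x"
    using assms measurable_F_imp_M[OF t D_measurable[OF t Y]]
    by (intro sigma_finite_subalgebra.real_cond_exp_cong[OF sigma_finite_subalgebra_F[OF zero]]) auto
  moreover have "AE x in M. real_cond_exp M (F 0) (\<lambda>_. c) x = c"
    by (intro sigma_finite_subalgebra.real_cond_exp_F_meas[OF sigma_finite_subalgebra_F[OF zero]]) auto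
  ultimately show ?thesis
    using D_time_consistent[OF zero Y t \<open>0 \<le> t\<close>] by eventually_elim simp
qed

end

end

theorem lemma1:
  fixes M :: "'a measure" and F :: "real \<Rightarrow> 'a measure" and T t :: real
    and W :: "real \<Rightarrow> 'a \<Rightarrow> real" and D :: "real \<Rightarrow> ('a \<Rightarrow> real) \<Rightarrow> ('a \<Rightarrow> real)"
    and Y :: "'a \<Rightarrow> real"
  assumes "filtered_complete_prob_space M F T"
    and "brownian_motion M F T W"
    and "dynamic_deviation_measure M F T D"
    and "distribution_invariant M F T D"
    and "t \<in> {0..T}"
    and "L2 M (F T) Y"
    and "prob_space.indep_set M (sets (vimage_algebra (space M) Y borel)) (sets (F t))"
  shows "(\<exists>c. AE x in M. D t Y x = c) \<and> (AE x in M. D t Y x = D 0 Y x)"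
proof -
  interpret deviation_measure_space M F T D
    using assms(1,3) unfolding deviation_measure_space_def deviation_measure_space_axioms_def
      filtered_prob_space_def by blast
  have const: "AE x in M. D t Y x = expectation (D t Y)"
  proof (cases "t = 0")
    case True
    then show ?thesis
      using D_0_AE_eq_expectation[OF assms(2,4,6)] by simp
  next
    case False
    then show ?thesis
      using D_indep_AE_eq_expectation[OF assms(5-7) assms(2,4)] assms(5) by simp
  qed
  moreover have "AE x in M. D 0 Y x = expectation (D t Y)"
    using D_0_AE_eq_if_D_AE_eq[OF assms(5-7) const] .
  ultimately have "AE x in M. D t Y x = D 0 Y x"
    by eventually_elim simp
  with const show ?thesis
    by blast
qed

end
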